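(* The set of nilpotent elements of $\mathcal A_V$ is norm dense in $\mathcal A_V$.
   Context: $V$ is the Volterra operator on $L^2[0,1]$, $V\xi(x)=\int_0^x\xi(t)\,dt$, and $\mathcal A_V$ is the operator-norm closure in $\mathcal B(L^2[0,1])$ of the polynomials $p(V)$ with $p(0)=0$. *)

theory Defs
  imports "HOL-Analysis.Analysis" "HOL-Computational_Algebra.Polynomial"
begin

text \<open>L^2[0,1] (complex scalars), represented by square-integrable Borel functions on [0,1];
  elements of L^2 are identified when their difference has L^2-norm zero (a.e. equality).\<close>

definition M01 :: "real measure" where
  "M01 = restrict_space lborel {0..1}"

definition L2 :: "(real \<Rightarrow> complex) set" where
  "L2 = {f. f \<in> borel_measurable M01 \<and> integrable M01 (\<lambda>x. (cmod (f x))\<^sup>2)}"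

definition l2norm :: "(real \<Rightarrow> complex) \<Rightarrow> real" where
  "l2norm f = sqrt (integral\<^sup>L M01 (\<lambda>x. (cmod (f x))\<^sup>2))"

text \<open>Bounded linear operators on L^2[0,1]: maps L^2 into L^2, well defined on a.e.-classes,
  linear modulo null functions, and bounded.\<close>

definition bounded_op :: "((real \<Rightarrow> complex) \<Rightarrow> (real \<Rightarrow> complex)) \<Rightarrow> bool" where
  "bounded_op T \<longleftrightarrow>
     (\<forall>f\<in>L2. T f \<in> L2) \<and>
     (\<forall>f\<in>L2. \<forall>g\<in>L2. l2norm (\<lambda>x. f x - g x) = 0 \<longrightarrow> l2norm (\<lambda>x. T f x - T g x) = 0) \<and>
     (\<forall>f\<in>L2. \<forall>g\<in>L2. \<forall>a b. l2norm (\<lambda>x. T (\<lambda>y. a * f y + b * g y) x - (a * T f x + b * T g x)) = 0) \<and>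
     (\<exists>C. \<forall>f\<in>L2. l2norm (T f) \<le> C * l2norm f)"

definition opnorm :: "((real \<Rightarrow> complex) \<Rightarrow> (real \<Rightarrow> complex)) \<Rightarrow> real" where
  "opnorm T = Sup {l2norm (T f) | f. f \<in> L2 \<and> l2norm f \<le> 1}"

definition volterra :: "(real \<Rightarrow> complex) \<Rightarrow> (real \<Rightarrow> complex)" where
  "volterra f = (\<lambda>x. LINT t:{0..x}|lborel. f t)"

definition polyV :: "complex poly \<Rightarrow> (real \<Rightarrow> complex) \<Rightarrow> (real \<Rightarrow> complex)" where
  "polyV p f = (\<lambda>x. \<Sum>k\<le>degree p. coeff p k * (volterra ^^ k) f x)"

definition in_AV :: "((real \<Rightarrow> complex) \<Rightarrow> (real \<Rightarrow> complex)) \<Rightarrow> bool" where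
  "in_AV T \<longleftrightarrow> bounded_op T \<and>
     (\<forall>e>0. \<exists>p. poly p 0 = 0 \<and> opnorm (\<lambda>f x. T f x - polyV p f x) < e)"

definition nilpotent_op :: "((real \<Rightarrow> complex) \<Rightarrow> (real \<Rightarrow> complex)) \<Rightarrow> bool" where
  "nilpotent_op T \<longleftrightarrow> (\<exists>n. \<forall>f\<in>L2. l2norm ((T ^^ n) f) = 0)"

end

theory Submission
  imports Defs
begin

text \<open>Every element of A_V is a norm limit of operators p(V) with p(0) = 0, and by Cauchy's
  formula for repeated integration p(V) is the convolution f \<mapsto> (x \<mapsto> \<integral> k(x - t) f(t) dt over
  [0, x]) with a polynomial kernel k. Multiplying k by a continuous cutoff that vanishes on [0, \<delta>]
  and equals 1 beyond 2\<delta> changes the operator by at most sup |k| \<cdot> sqrt (2\<delta>) in norm, by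
  Cauchy-Schwarz on intervals of length 2\<delta>. The new operator is nilpotent, since each application
  moves the support of a function a distance \<delta> away from 0, and it lies in A_V, since every
  continuous kernel is a uniform limit of polynomial kernels (Weierstrass) and polynomial kernels
  come from polynomials in V.\<close>

lemma space_M01 [simp]: "space M01 = {0..1}"
  by (simp add: M01_def)

lemma emeasure_M01: "emeasure M01 {0..1} = 1"
  unfolding M01_def by (simp add: emeasure_restrict_space)

lemma measure_M01: "measure M01 {0..1} = 1"
  using emeasure_M01 by (simp add: measure_def)

interpretation M01: finite_measure M01
  by (rule finite_measureI) (simp add: emeasure_M01)

lemma L2_measurable: "f \<in> L2 \<Longrightarrow> f \<in> borel_measurable M01"
  unfolding L2_def by blast

lemma L2_square_integrable: "f \<in> L2 \<Longrightarrow> integrable M01 (\<lambda>x. (cmod (f x))\<^sup>2)"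
  unfolding L2_def by blast

lemma l2norm_nonneg: "l2norm f \<ge> 0"
  by (simp add: l2norm_def)

lemma l2norm_zero: "l2norm (\<lambda>x. 0) = 0"
  by (simp add: l2norm_def)

lemma l2norm_uminus: "l2norm (\<lambda>x. - f x) = l2norm f"
  by (simp add: l2norm_def)

lemma l2norm_cong:
  assumes "\<And>x. x \<in> {0..1} \<Longrightarrow> f x = g x"
  shows "l2norm f = l2norm g"
proof -
  have "integral\<^sup>L M01 (\<lambda>x. (cmod (f x))\<^sup>2) = integral\<^sup>L M01 (\<lambda>x. (cmod (g x))\<^sup>2)"
    by (rule Bochner_Integration.integral_cong[OF refl]) (use assms in auto)
  then show ?thesis unfolding l2norm_def by simp
qed

lemma L2_cong:
  assumes "f \<in> L2" "\<And>x. x \<in> {0..1} \<Longrightarrow> f x = g x"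
  shows "g \<in> L2"
proof -
  have "f \<in> borel_measurable M01 \<longleftrightarrow> g \<in> borel_measurable M01"
    by (rule measurable_cong) (use assms(2) in simp)
  moreover have "integrable M01 (\<lambda>x. (cmod (f x))\<^sup>2) \<longleftrightarrow> integrable M01 (\<lambda>x. (cmod (g x))\<^sup>2)"
    by (rule Bochner_Integration.integrable_cong[OF refl]) (use assms(2) in auto)
  ultimately show ?thesis using assms(1) unfolding L2_def by blast
qed

lemma l2norm_le_sup:
  assumes "g \<in> borel_measurable M01" and "\<And>x. x \<in> {0..1} \<Longrightarrow> norm (g x) \<le> C"
  shows "l2norm g \<le> C"
proof -
  have C: "C \<ge> 0" using order_trans[OF norm_ge_zero assms(2)[of 0]] by simp
  have "integrable M01 (\<lambda>x. (cmod (g x))\<^sup>2)"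
    by (rule M01.integrable_const_bound[where B="C\<^sup>2"]) (use assms C in \<open>auto intro!: power_mono\<close>)
  then have "integral\<^sup>L M01 (\<lambda>x. (cmod (g x))\<^sup>2) \<le> integral\<^sup>L M01 (\<lambda>x. C\<^sup>2)"
    by (rule integral_mono) (use assms(2) C in \<open>auto intro!: power_mono\<close>)
  also have "\<dots> = C\<^sup>2" using measure_M01 by simp
  finally show ?thesis unfolding l2norm_def using C real_sqrt_le_mono by fastforce
qed

lemma L2_linear_combination:
  assumes f: "f \<in> L2" and g: "g \<in> L2"
  shows "(\<lambda>x. a * f x + b * g x) \<in> L2"
proof -
  note [measurable] = L2_measurable[OF f] L2_measurable[OF g]
  have bound: "integrable M01
      (\<lambda>x. 2 * (cmod a)\<^sup>2 * (cmod (f x))\<^sup>2 + 2 * (cmod b)\<^sup>2 * (cmod (g x))\<^sup>2)"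
    using L2_square_integrable[OF f] L2_square_integrable[OF g]
    by (intro Bochner_Integration.integrable_add integrable_mult_right)
  have "integrable M01 (\<lambda>x. (cmod (a * f x + b * g x))\<^sup>2)"
  proof (rule Bochner_Integration.integrable_bound[OF bound _ AE_I2])
    show "(\<lambda>x. (cmod (a * f x + b * g x))\<^sup>2) \<in> borel_measurable M01" by measurable
    fix x
    have "cmod (a * f x + b * g x) \<le> cmod a * cmod (f x) + cmod b * cmod (g x)"
      by (metis norm_mult norm_triangle_ineq)
    then have "(cmod (a * f x + b * g x))\<^sup>2 \<le> (cmod a * cmod (f x) + cmod b * cmod (g x))\<^sup>2"
      by (intro power_mono) auto
    also have "\<dots> \<le> 2 * (cmod a * cmod (f x))\<^sup>2 + 2 * (cmod b * cmod (g x))\<^sup>2"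
      by (smt (verit) sum_power2_ge_zero power2_diff power2_sum)
    finally show "norm ((cmod (a * f x + b * g x))\<^sup>2)
        \<le> norm (2 * (cmod a)\<^sup>2 * (cmod (f x))\<^sup>2 + 2 * (cmod b)\<^sup>2 * (cmod (g x))\<^sup>2)"
      by (simp add: power_mult_distrib)
  qed
  moreover have "(\<lambda>x. a * f x + b * g x) \<in> borel_measurable M01" by measurable
  ultimately show ?thesis by (simp add: L2_def)
qed

section \<open>The Cauchy-Schwarz and Minkowski inequalities\<close>

lemma le_sqrt_mult_if_le_amgm:
  fixes X A B :: real
  assumes A: "A \<ge> 0" and B: "B \<ge> 0" and amgm: "\<And>l. l > 0 \<Longrightarrow> X \<le> (l * A + B / l) / 2"
  shows "X \<le> sqrt A * sqrt B"
proof (rule ccontr)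
  assume X: "\<not> X \<le> sqrt A * sqrt B"
  then have "X > 0" using A B by (smt (verit) real_sqrt_ge_zero mult_nonneg_nonneg)
  consider "A > 0" "B > 0" | "A = 0" | "B = 0" using A B by linarith
  then show False
  proof cases
    case 1
    define l where "l = sqrt B / sqrt A"
    have "l > 0" using 1 by (simp add: l_def)
    moreover have "l * A + B / l = 2 * (sqrt A * sqrt B)"
      using 1 unfolding l_def by (simp add: field_simps)
    ultimately show False using amgm X by fastforce
  next
    case 2
    define l where "l = B / X + 1"
    have l: "l > 0" using \<open>X > 0\<close> B by (simp add: l_def add_nonneg_pos)
    have "B / l < X"
      using \<open>X > 0\<close> B by (simp add: l_def field_simps)
    moreover have "2 * X \<le> B / l" using amgm[OF l] 2 by simp
    ultimately show False using \<open>X > 0\<close> by linarith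
  next
    case 3
    define l where "l = X / (A + 1)"
    have l: "l > 0" using \<open>X > 0\<close> A by (simp add: l_def)
    have "l * A < X"
      using \<open>X > 0\<close> A by (simp add: l_def field_simps)
    moreover have "X \<le> (l * A) / 2" using amgm[OF l] 3 by simp
    ultimately show False using \<open>X > 0\<close> by linarith
  qed
qed

lemma Cauchy_Schwarz_integral:
  fixes f g :: "'a \<Rightarrow> real"
  assumes [measurable]: "f \<in> borel_measurable M" "g \<in> borel_measurable M"
    and f2: "integrable M (\<lambda>x. (f x)\<^sup>2)" and g2: "integrable M (\<lambda>x. (g x)\<^sup>2)"
  shows "integrable M (\<lambda>x. f x * g x)"
    and "(\<integral>x. f x * g x \<partial>M) \<le> sqrt (\<integral>x. (f x)\<^sup>2 \<partial>M) * sqrt (\<integral>x. (g x)\<^sup>2 \<partial>M)"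
proof -
  have "integrable M (\<lambda>x. (f x)\<^sup>2 + (g x)\<^sup>2)"
    using f2 g2 by (rule Bochner_Integration.integrable_add)
  then show fg: "integrable M (\<lambda>x. f x * g x)"
  proof (rule Bochner_Integration.integrable_bound[OF _ _ AE_I2])
    fix x
    have "0 \<le> (\<bar>f x\<bar> - \<bar>g x\<bar>)\<^sup>2" by simp
    then have "2 * (\<bar>f x\<bar> * \<bar>g x\<bar>) \<le> (f x)\<^sup>2 + (g x)\<^sup>2"
      by (simp add: power2_eq_square algebra_simps)
    moreover have "0 \<le> \<bar>f x\<bar> * \<bar>g x\<bar>" by simp
    ultimately have "\<bar>f x\<bar> * \<bar>g x\<bar> \<le> (f x)\<^sup>2 + (g x)\<^sup>2" by linarith
    then show "norm (f x * g x) \<le> norm ((f x)\<^sup>2 + (g x)\<^sup>2)"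
      by (simp add: abs_mult)
  qed measurable
  show "(\<integral>x. f x * g x \<partial>M) \<le> sqrt (\<integral>x. (f x)\<^sup>2 \<partial>M) * sqrt (\<integral>x. (g x)\<^sup>2 \<partial>M)"
  proof (rule le_sqrt_mult_if_le_amgm)
    fix l :: real
    assume l: "l > 0"
    have "(\<integral>x. f x * g x \<partial>M) \<le> (\<integral>x. (l * (f x)\<^sup>2 + (g x)\<^sup>2 / l) / 2 \<partial>M)"
    proof (rule integral_mono[OF fg])
      show "integrable M (\<lambda>x. (l * (f x)\<^sup>2 + (g x)\<^sup>2 / l) / 2)"
        using f2 g2 by simp
      fix x
      have "0 \<le> (l * f x - g x)\<^sup>2" by simp
      then show "f x * g x \<le> (l * (f x)\<^sup>2 + (g x)\<^sup>2 / l) / 2"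
        using l by (simp add: field_simps power2_eq_square)
    qed
    also have "\<dots> = (l * (\<integral>x. (f x)\<^sup>2 \<partial>M) + (\<integral>x. (g x)\<^sup>2 \<partial>M) / l) / 2"
      using f2 g2 by simp
    finally show "(\<integral>x. f x * g x \<partial>M) \<le> \<dots>" .
  qed simp_all
qed

lemma l2norm_add_le:
  assumes f: "f \<in> L2" and g: "g \<in> L2"
  shows "l2norm (\<lambda>x. f x + g x) \<le> l2norm f + l2norm g"
proof -
  note [measurable] = L2_measurable[OF f] L2_measurable[OF g]
  define A where "A = integral\<^sup>L M01 (\<lambda>x. (cmod (f x))\<^sup>2)"
  define B where "B = integral\<^sup>L M01 (\<lambda>x. (cmod (g x))\<^sup>2)"
  define P where "P = integral\<^sup>L M01 (\<lambda>x. cmod (f x) * cmod (g x))"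
  have iA: "integrable M01 (\<lambda>x. (cmod (f x))\<^sup>2)" and iB: "integrable M01 (\<lambda>x. (cmod (g x))\<^sup>2)"
    using f g by (simp_all add: L2_square_integrable)
  note CS = Cauchy_Schwarz_integral[of "\<lambda>x. cmod (f x)" M01 "\<lambda>x. cmod (g x)", OF _ _ iA iB]
  have iP: "integrable M01 (\<lambda>x. cmod (f x) * cmod (g x))" and P: "P \<le> sqrt A * sqrt B"
    using CS unfolding A_def B_def P_def by simp_all
  have "integral\<^sup>L M01 (\<lambda>x. (cmod (f x + g x))\<^sup>2)
      \<le> integral\<^sup>L M01 (\<lambda>x. (cmod (f x))\<^sup>2 + 2 * (cmod (f x) * cmod (g x)) + (cmod (g x))\<^sup>2)"
  proof (rule integral_mono)
    show "integrable M01 (\<lambda>x. (cmod (f x + g x))\<^sup>2)"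
      using L2_square_integrable[OF L2_linear_combination[OF f g, of 1 1]] by simp
    show "integrable M01 (\<lambda>x. (cmod (f x))\<^sup>2 + 2 * (cmod (f x) * cmod (g x)) + (cmod (g x))\<^sup>2)"
      using iA iB iP by simp
    fix x
    have "(cmod (f x + g x))\<^sup>2 \<le> (cmod (f x) + cmod (g x))\<^sup>2"
      by (intro power_mono norm_triangle_ineq) simp
    then show "(cmod (f x + g x))\<^sup>2
        \<le> (cmod (f x))\<^sup>2 + 2 * (cmod (f x) * cmod (g x)) + (cmod (g x))\<^sup>2"
      by (simp add: power2_sum)
  qed
  also have "\<dots> = A + 2 * P + B"
    using iA iB iP by (simp add: A_def B_def P_def)
  also have "\<dots> \<le> (sqrt A + sqrt B)\<^sup>2"
    using P by (simp add: power2_sum A_def B_def)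
  finally have "sqrt (integral\<^sup>L M01 (\<lambda>x. (cmod (f x + g x))\<^sup>2)) \<le> sqrt ((sqrt A + sqrt B)\<^sup>2)"
    by (rule real_sqrt_le_mono)
  then show ?thesis
    unfolding l2norm_def A_def B_def by simp
qed

lemma L2_diff: "f \<in> L2 \<Longrightarrow> g \<in> L2 \<Longrightarrow> (\<lambda>x. f x - g x) \<in> L2"
  using L2_linear_combination[of f g 1 "-1"] by simp

lemma l2norm_diff_le:
  assumes "f \<in> L2" and "g \<in> L2"
  shows "l2norm (\<lambda>x. f x - g x) \<le> l2norm f + l2norm g"
  using l2norm_add_le[OF assms(1) L2_linear_combination[OF assms(2,2), of "-1" 0]]
  by (simp add: l2norm_uminus)

text \<open>Elements of L2 only matter on [0,1]; cut off to zero outside, they become Lebesgue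
  integrable on the real line, where the convolution integrals below are taken.\<close>

definition restrict01 :: "(real \<Rightarrow> complex) \<Rightarrow> real \<Rightarrow> complex" where
  "restrict01 f = (\<lambda>t. indicator {0..1} t *\<^sub>R f t)"

definition L2_supp01 :: "(real \<Rightarrow> complex) \<Rightarrow> bool" where
  "L2_supp01 f \<longleftrightarrow> f \<in> L2 \<and> (\<forall>t. t \<notin> {0..1} \<longrightarrow> f t = 0)"

lemma restrict01_eq [simp]: "t \<in> {0..1} \<Longrightarrow> restrict01 f t = f t"
  by (simp add: restrict01_def)

lemma L2_supp01_restrict01: "f \<in> L2 \<Longrightarrow> L2_supp01 (restrict01 f)"
  unfolding L2_supp01_def by (auto intro: L2_cong simp: restrict01_def)

lemma l2norm_restrict01: "l2norm (restrict01 f) = l2norm f"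
  by (rule l2norm_cong) simp

lemma restrict01_linear_combination:
  "restrict01 (\<lambda>y. a * f y + b * g y) = (\<lambda>t. a * restrict01 f t + b * restrict01 g t)"
  by (auto simp: fun_eq_iff restrict01_def indicator_def)

lemma L2_supp01_eq_restrict01: "L2_supp01 f \<Longrightarrow> restrict01 f = f"
  by (auto simp: L2_supp01_def restrict01_def indicator_def fun_eq_iff)

lemma L2_supp01_measurable:
  assumes "L2_supp01 f"
  shows "f \<in> borel_measurable borel"
proof -
  have "restrict01 f \<in> borel_measurable borel"
    using assms unfolding L2_supp01_def L2_def M01_def restrict01_def
    by (subst (asm) borel_measurable_restrict_space_iff) auto
  then show ?thesis using L2_supp01_eq_restrict01[OF assms] by simp
qed

lemma L2_supp01_integral_square:
  assumes "L2_supp01 f"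
  shows "integrable lborel (\<lambda>t. (cmod (f t))\<^sup>2)"
    and "integral\<^sup>L M01 (\<lambda>t. (cmod (f t))\<^sup>2) = (\<integral>t. (cmod (f t))\<^sup>2 \<partial>lborel)"
proof -
  have interval: "{0..1::real} \<inter> space lborel \<in> sets lborel" by simp
  have restrict: "(\<lambda>t. indicator {0..1} t *\<^sub>R (cmod (f t))\<^sup>2) = (\<lambda>t. (cmod (f t))\<^sup>2)"
    using assms unfolding L2_supp01_def by (auto simp: fun_eq_iff indicator_def)
  have "integrable M01 (\<lambda>x. (cmod (f x))\<^sup>2)"
    using assms unfolding L2_supp01_def L2_def by blast
  then show "integrable lborel (\<lambda>t. (cmod (f t))\<^sup>2)"
    unfolding M01_def integrable_restrict_space[OF interval] restrict .
  show "integral\<^sup>L M01 (\<lambda>t. (cmod (f t))\<^sup>2) = (\<integral>t. (cmod (f t))\<^sup>2 \<partial>lborel)"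
    unfolding M01_def integral_restrict_space[OF interval] restrict ..
qed

lemma L2_supp01_integrable:
  assumes "L2_supp01 f"
  shows "integrable lborel f"
proof -
  have m: "f \<in> borel_measurable M01" and "integrable M01 (\<lambda>x. (cmod (f x))\<^sup>2)"
    using assms unfolding L2_supp01_def L2_def by blast+
  then have "integrable M01 (\<lambda>x. (f x)\<^sup>2)"
    by (subst integrable_norm_iff[symmetric]) (auto simp: norm_power)
  then have "integrable M01 f"
    using M01.square_integrable_imp_integrable m by blast
  then have "integrable lborel (\<lambda>t. indicator {0..1} t *\<^sub>R f t)"
    unfolding M01_def by (subst (asm) integrable_restrict_space) auto
  then show ?thesis
    using L2_supp01_eq_restrict01[OF assms] unfolding restrict01_def by simp
qed

lemma integral_Icc_norm_le:
  assumes f: "L2_supp01 f" and d: "d \<ge> 0"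
  shows "(\<integral>t. indicator {c - d..c} t * norm (f t) \<partial>lborel) \<le> sqrt d * l2norm f"
proof -
  have [measurable]: "f \<in> borel_measurable lborel"
    using L2_supp01_measurable[OF f] by simp
  have ind: "(indicator {c - d..c} t)\<^sup>2 = (indicator {c - d..c} t :: real)" for t
    by (simp add: indicator_def)
  have ind2: "integrable lborel (\<lambda>t. (indicator {c - d..c} t :: real)\<^sup>2)"
    by (simp add: ind emeasure_lborel_Icc_eq)
  have "(\<integral>t. indicator {c - d..c} t * norm (f t) \<partial>lborel)
      \<le> sqrt (\<integral>t. (indicator {c - d..c} t)\<^sup>2 \<partial>lborel) * sqrt (\<integral>t. (cmod (f t))\<^sup>2 \<partial>lborel)"
    by (rule Cauchy_Schwarz_integral(2)[OF _ _ ind2 L2_supp01_integral_square(1)[OF f]]; measurable)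
  also have "(\<lambda>t. (indicator {c - d..c} t)\<^sup>2) = (indicator {c - d..c} :: real \<Rightarrow> real)"
    by (simp only: ind)
  also have "(\<integral>t. indicator {c - d..c} t \<partial>lborel) = d"
    using d by (simp add: integral_indicator emeasure_lborel_Icc_eq)
  also have "sqrt (\<integral>t. (cmod (f t))\<^sup>2 \<partial>lborel) = l2norm f"
    using L2_supp01_integral_square(2)[OF f] by (simp add: l2norm_def)
  finally show ?thesis .
qed

section \<open>Volterra convolutions\<close>

text \<open>With the kernel k u = u^j/j! this is V^(j+1), by Cauchy's formula below.\<close>

definition vconv :: "(real \<Rightarrow> complex) \<Rightarrow> (real \<Rightarrow> complex) \<Rightarrow> real \<Rightarrow> complex" where
  "vconv k f x = (LINT t:{0..x}|lborel. k (x - t) * f t)"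

definition vconv_op :: "(real \<Rightarrow> complex) \<Rightarrow> (real \<Rightarrow> complex) \<Rightarrow> real \<Rightarrow> complex" where
  "vconv_op k f = vconv k (restrict01 f)"

lemma continuous_on_compact_norm_bound:
  fixes k :: "'a::topological_space \<Rightarrow> 'b::real_normed_vector"
  assumes "compact S" and "continuous_on S k"
  obtains B where "B \<ge> 0" "\<And>u. u \<in> S \<Longrightarrow> norm (k u) \<le> B"
proof -
  have "bounded (k ` S)"
    by (intro compact_imp_bounded compact_continuous_image assms)
  then obtain B where "B > 0" "\<And>u. u \<in> S \<Longrightarrow> norm (k u) \<le> B"
    unfolding bounded_pos by blast
  then show ?thesis using that[of B] by simp
qed

lemma vconv_integrand_measurable:
  assumes "L2_supp01 f" and "continuous_on UNIV k"
  shows "(\<lambda>(x, t). indicator {0..x} t *\<^sub>R (k (x - t) * f t)) \<in> borel_measurable (lborel \<Otimes>\<^sub>M lborel)"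
proof -
  note [measurable] = L2_supp01_measurable[OF assms(1)] borel_measurable_continuous_onI[OF assms(2)]
  have "(\<lambda>(x, t). indicator {0..x} t *\<^sub>R (k (x - t) * f t)) =
      (\<lambda>z. (if 0 \<le> snd z \<and> snd z \<le> fst z then 1 else 0) *\<^sub>R (k (fst z - snd z) * f (snd z)))"
    by (auto simp: fun_eq_iff indicator_def)
  then show ?thesis by simp
qed

lemma vconv_measurable:
  assumes "L2_supp01 f" and "continuous_on UNIV k"
  shows "vconv k f \<in> borel_measurable lborel"
proof -
  have "(\<lambda>x. \<integral>t. indicator {0..x} t *\<^sub>R (k (x - t) * f t) \<partial>lborel) \<in> borel_measurable lborel"
    using vconv_integrand_measurable[OF assms]
    by (intro lborel.borel_measurable_lebesgue_integral) simp
  then show ?thesis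
    unfolding vconv_def set_lebesgue_integral_def by (simp add: fun_eq_iff)
qed

lemma vconv_integrable:
  assumes f: "L2_supp01 f" and k: "continuous_on UNIV k" and x: "x \<le> 1"
  shows "integrable lborel (\<lambda>t. indicator {0..x} t *\<^sub>R (k (x - t) * f t))"
proof -
  obtain B where B: "B \<ge> 0" "\<And>u. u \<in> {0..1} \<Longrightarrow> norm (k u) \<le> B"
    using continuous_on_compact_norm_bound[OF compact_Icc continuous_on_subset[OF k subset_UNIV]]
    by blast
  note [measurable] = L2_supp01_measurable[OF f] borel_measurable_continuous_onI[OF k]
  have int: "integrable lborel (\<lambda>t. B *\<^sub>R f t)"
    using L2_supp01_integrable[OF f] by simp
  have m: "(\<lambda>t. indicator {0..x} t *\<^sub>R (k (x - t) * f t)) \<in> borel_measurable lborel"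
    by measurable
  show ?thesis
  proof (rule Bochner_Integration.integrable_bound[OF int m AE_I2])
    fix t
    show "norm (indicator {0..x} t *\<^sub>R (k (x - t) * f t)) \<le> norm (B *\<^sub>R f t)"
    proof (cases "t \<in> {0..x}")
      case True
      then have "norm (k (x - t)) \<le> B" using x B(2) by simp
      then show ?thesis using True B(1) by (simp add: norm_mult mult_right_mono)
    qed simp
  qed
qed

lemma norm_vconv_le:
  assumes f: "L2_supp01 f" and k: "continuous_on UNIV k"
    and B: "\<And>u. u \<in> {0..1} \<Longrightarrow> norm (k u) \<le> B"
    and k0: "\<And>u. u \<in> {0..1} \<Longrightarrow> u > d \<Longrightarrow> k u = 0" and d: "d \<ge> 0" and x: "x \<le> 1"
  shows "norm (vconv k f x) \<le> B * sqrt d * l2norm f"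
proof -
  have B0: "B \<ge> 0" using order_trans[OF norm_ge_zero B[of 0]] by simp
  have "integrable lborel (\<lambda>t. norm (f t))"
    using L2_supp01_integrable[OF f] by simp
  then have int: "integrable lborel (\<lambda>t. B * (indicator {x - d..x} t * norm (f t)))"
    using integrable_mult_indicator[of "{x - d..x}" lborel "\<lambda>t. norm (f t)"] by simp
  have "norm (vconv k f x) \<le> (\<integral>t. B * (indicator {x - d..x} t * norm (f t)) \<partial>lborel)"
    unfolding vconv_def set_lebesgue_integral_def
  proof (rule Bochner_Integration.integral_norm_bound_integral[OF vconv_integrable[OF f k x] int])
    fix t
    show "norm (indicator {0..x} t *\<^sub>R (k (x - t) * f t))
        \<le> B * (indicator {x - d..x} t * norm (f t))"
    proof (cases "t \<in> {0..x}")
      case True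
      then have u: "x - t \<in> {0..1}" using x by auto
      show ?thesis
      proof (cases "x - t > d")
        case True
        then show ?thesis using k0[OF u] B0 by simp
      next
        case False
        then have "t \<in> {x - d..x}" using \<open>t \<in> {0..x}\<close> by auto
        then show ?thesis using True B[OF u] by (simp add: norm_mult mult_right_mono)
      qed
    qed (use B0 in simp)
  qed
  also have "\<dots> = B * (\<integral>t. indicator {x - d..x} t * norm (f t) \<partial>lborel)"
    by simp
  also have "\<dots> \<le> B * (sqrt d * l2norm f)"
    using integral_Icc_norm_le[OF f d, of x] B0 by (rule mult_left_mono)
  finally show ?thesis by (simp add: mult.assoc)
qed

lemma vconv_L2:
  assumes f: "L2_supp01 f" and k: "continuous_on UNIV k"
  shows "vconv k f \<in> L2"
proof -
  obtain B where B: "B \<ge> 0" "\<And>u. u \<in> {0..1} \<Longrightarrow> norm (k u) \<le> B"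
    using continuous_on_compact_norm_bound[OF compact_Icc continuous_on_subset[OF k subset_UNIV]]
    by blast
  have m: "vconv k f \<in> borel_measurable M01"
    unfolding M01_def by (rule measurable_restrict_space1[OF vconv_measurable[OF f k]])
  have "norm (vconv k f x) \<le> B * l2norm f" if "x \<in> {0..1}" for x
    using norm_vconv_le[OF f k B(2), of 1 x] that by simp
  then have "integrable M01 (\<lambda>x. (cmod (vconv k f x))\<^sup>2)"
    by (intro M01.integrable_const_bound[where B="(B * l2norm f)\<^sup>2"])
      (use m B l2norm_nonneg in \<open>auto intro!: power_mono\<close>)
  then show ?thesis using m unfolding L2_def by blast
qed

lemma vconv_linear:
  assumes f: "L2_supp01 f" and g: "L2_supp01 g" and x: "x \<le> 1" and k: "continuous_on UNIV k"
  shows "vconv k (\<lambda>t. a * f t + b * g t) x = a * vconv k f x + b * vconv k g x"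
proof -
  have "vconv k (\<lambda>t. a * f t + b * g t) x =
    (\<integral>t. a * (indicator {0..x} t *\<^sub>R (k (x - t) * f t))
      + b * (indicator {0..x} t *\<^sub>R (k (x - t) * g t)) \<partial>lborel)"
    unfolding vconv_def set_lebesgue_integral_def
    by (rule Bochner_Integration.integral_cong[OF refl]) (auto simp: indicator_def algebra_simps)
  also have "\<dots> = (\<integral>t. a * (indicator {0..x} t *\<^sub>R (k (x - t) * f t)) \<partial>lborel)
      + (\<integral>t. b * (indicator {0..x} t *\<^sub>R (k (x - t) * g t)) \<partial>lborel)"
    by (intro Bochner_Integration.integral_add integrable_mult_right
        vconv_integrable[OF f k x] vconv_integrable[OF g k x])
  also have "\<dots> = a * vconv k f x + b * vconv k g x"
    unfolding vconv_def set_lebesgue_integral_def by (simp only: integral_mult_right_zero)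
  finally show ?thesis .
qed

lemma vconv_kernel_sum:
  assumes f: "L2_supp01 f" and x: "x \<le> 1" and k: "\<And>i. i \<in> I \<Longrightarrow> continuous_on UNIV (k i)"
  shows "(\<Sum>i\<in>I. c i * vconv (k i) f x) = vconv (\<lambda>u. \<Sum>i\<in>I. c i * k i u) f x"
proof -
  have "(\<Sum>i\<in>I. c i * vconv (k i) f x)
      = (\<Sum>i\<in>I. \<integral>t. c i * (indicator {0..x} t *\<^sub>R (k i (x - t) * f t)) \<partial>lborel)"
    unfolding vconv_def set_lebesgue_integral_def by (simp only: integral_mult_right_zero)
  also have "\<dots> = (\<integral>t. (\<Sum>i\<in>I. c i * (indicator {0..x} t *\<^sub>R (k i (x - t) * f t))) \<partial>lborel)"
    by (rule Bochner_Integration.integral_sum[symmetric])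
      (intro integrable_mult_right vconv_integrable[OF f k x])
  also have "\<dots> = vconv (\<lambda>u. \<Sum>i\<in>I. c i * k i u) f x"
    unfolding vconv_def set_lebesgue_integral_def
    by (rule Bochner_Integration.integral_cong[OF refl])
      (auto simp: indicator_def sum_distrib_right mult.assoc)
  finally show ?thesis .
qed

lemma vconv_kernel_diff:
  assumes "L2_supp01 f" and "x \<le> 1" and "continuous_on UNIV k1" and "continuous_on UNIV k2"
  shows "vconv k1 f x - vconv k2 f x = vconv (\<lambda>u. k1 u - k2 u) f x"
proof -
  have "vconv k1 f x - vconv k2 f x = (\<integral>t. indicator {0..x} t *\<^sub>R (k1 (x - t) * f t)
      - indicator {0..x} t *\<^sub>R (k2 (x - t) * f t) \<partial>lborel)"
    unfolding vconv_def set_lebesgue_integral_def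
    by (rule Bochner_Integration.integral_diff[symmetric]) (intro vconv_integrable assms)+
  also have "\<dots> = vconv (\<lambda>u. k1 u - k2 u) f x"
    unfolding vconv_def set_lebesgue_integral_def
    by (rule Bochner_Integration.integral_cong[OF refl]) (auto simp: indicator_def algebra_simps)
  finally show ?thesis .
qed

lemma vconv_op_L2:
  assumes "continuous_on UNIV k" and "f \<in> L2"
  shows "vconv_op k f \<in> L2"
  unfolding vconv_op_def by (rule vconv_L2[OF L2_supp01_restrict01[OF assms(2)] assms(1)])

lemma l2norm_vconv_op_le:
  assumes k: "continuous_on UNIV k" and B: "\<And>u. u \<in> {0..1} \<Longrightarrow> norm (k u) \<le> B"
    and k0: "\<And>u. u \<in> {0..1} \<Longrightarrow> u > d \<Longrightarrow> k u = 0" and d: "d \<ge> 0" and f: "f \<in> L2"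
  shows "l2norm (vconv_op k f) \<le> B * sqrt d * l2norm f"
proof -
  have g: "L2_supp01 (restrict01 f)" by (rule L2_supp01_restrict01[OF f])
  have "vconv_op k f \<in> borel_measurable M01"
    unfolding M01_def vconv_op_def by (rule measurable_restrict_space1[OF vconv_measurable[OF g k]])
  then have "l2norm (vconv_op k f) \<le> B * sqrt d * l2norm (restrict01 f)"
    by (rule l2norm_le_sup) (auto simp: vconv_op_def intro: norm_vconv_le[OF g k B k0 d])
  then show ?thesis by (simp add: l2norm_restrict01)
qed

lemma vconv_op_linear:
  assumes "continuous_on UNIV k" and "f \<in> L2" and "g \<in> L2" and "x \<le> 1"
  shows "vconv_op k (\<lambda>y. a * f y + b * g y) x = a * vconv_op k f x + b * vconv_op k g x"
  unfolding vconv_op_def restrict01_linear_combination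
  using assms by (intro vconv_linear L2_supp01_restrict01)

lemma vconv_op_kernel_diff:
  assumes "f \<in> L2" and "x \<le> 1" and "continuous_on UNIV k1" and "continuous_on UNIV k2"
  shows "vconv_op k1 f x - vconv_op k2 f x = vconv_op (\<lambda>u. k1 u - k2 u) f x"
  unfolding vconv_op_def using assms by (intro vconv_kernel_diff L2_supp01_restrict01)

lemma bounded_op_vconv_op:
  assumes k: "continuous_on UNIV k"
  shows "bounded_op (vconv_op k)"
proof -
  obtain B where B: "\<And>u. u \<in> {0..1} \<Longrightarrow> norm (k u) \<le> B"
    using continuous_on_compact_norm_bound[OF compact_Icc continuous_on_subset[OF k subset_UNIV]]
    by blast
  have bound: "l2norm (vconv_op k f) \<le> B * l2norm f" if "f \<in> L2" for f
    using l2norm_vconv_op_le[OF k B, of 1 f] that by simp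
  show ?thesis unfolding bounded_op_def
  proof (intro conjI ballI allI impI)
    show "vconv_op k f \<in> L2" if "f \<in> L2" for f
      using vconv_op_L2[OF k that] .
    show "\<exists>C. \<forall>f\<in>L2. l2norm (vconv_op k f) \<le> C * l2norm f"
      using bound by blast
  next
    fix f g assume f: "f \<in> L2" and g: "g \<in> L2" and fg: "l2norm (\<lambda>x. f x - g x) = 0"
    have "l2norm (\<lambda>x. vconv_op k f x - vconv_op k g x) = l2norm (vconv_op k (\<lambda>x. f x - g x))"
      by (rule l2norm_cong) (use vconv_op_linear[OF k f g, of _ 1 "-1"] in simp)
    also have "\<dots> \<le> 0"
      using bound[OF L2_linear_combination[OF f g, of 1 "-1"]] fg by simp
    finally show "l2norm (\<lambda>x. vconv_op k f x - vconv_op k g x) = 0"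
      using l2norm_nonneg by (rule order_antisym)
  next
    fix f g a b assume f: "f \<in> L2" and g: "g \<in> L2"
    have "l2norm (\<lambda>x. vconv_op k (\<lambda>y. a * f y + b * g y) x
        - (a * vconv_op k f x + b * vconv_op k g x)) = l2norm (\<lambda>x. 0)"
      by (rule l2norm_cong) (simp add: vconv_op_linear[OF k f g])
    then show "l2norm (\<lambda>x. vconv_op k (\<lambda>y. a * f y + b * g y) x
        - (a * vconv_op k f x + b * vconv_op k g x)) = 0"
      by (simp add: l2norm_zero)
  qed
qed

lemma opnorm_le:
  assumes "\<And>f. f \<in> L2 \<Longrightarrow> l2norm f \<le> 1 \<Longrightarrow> l2norm (A f) \<le> M"
  shows "opnorm A \<le> M"
  unfolding opnorm_def
proof (rule cSup_least)
  have "(\<lambda>x. 0) \<in> L2" by (simp add: L2_def)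
  then show "{l2norm (A f) |f. f \<in> L2 \<and> l2norm f \<le> 1} \<noteq> {}"
    using l2norm_zero by fastforce
qed (use assms in blast)

lemma l2norm_le_opnorm:
  assumes "\<And>f. f \<in> L2 \<Longrightarrow> l2norm f \<le> 1 \<Longrightarrow> l2norm (A f) \<le> M"
    and "f \<in> L2" and "l2norm f \<le> 1"
  shows "l2norm (A f) \<le> opnorm A"
  unfolding opnorm_def
proof (rule cSup_upper)
  show "l2norm (A f) \<in> {l2norm (A f) |f. f \<in> L2 \<and> l2norm f \<le> 1}"
    using assms(2,3) by blast
  show "bdd_above {l2norm (A f) |f. f \<in> L2 \<and> l2norm f \<le> 1}"
    unfolding bdd_above_def using assms(1) by blast
qed

lemma opnorm_cong:
  assumes "\<And>f x. f \<in> L2 \<Longrightarrow> x \<in> {0..1} \<Longrightarrow> A f x = B f x"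
  shows "opnorm A = opnorm B"
proof -
  have "l2norm (A f) = l2norm (B f)" if "f \<in> L2" for f
    using assms that by (intro l2norm_cong) simp
  then show ?thesis
    unfolding opnorm_def by (metis (no_types, lifting))
qed

lemma bounded_op_unit_ball_bound:
  assumes "bounded_op A"
  obtains M where "\<And>f. f \<in> L2 \<Longrightarrow> l2norm f \<le> 1 \<Longrightarrow> l2norm (A f) \<le> M"
proof -
  obtain C where C: "\<And>f. f \<in> L2 \<Longrightarrow> l2norm (A f) \<le> C * l2norm f"
    using assms unfolding bounded_op_def by blast
  have "l2norm (A f) \<le> max C 0" if "f \<in> L2" "l2norm f \<le> 1" for f
  proof -
    have "C * l2norm f \<le> max C 0 * l2norm f"
      by (intro mult_right_mono l2norm_nonneg) simp
    then have "l2norm (A f) \<le> max C 0 * l2norm f"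
      using C[OF that(1)] by linarith
    also have "\<dots> \<le> max C 0"
      using that(2) by (simp add: mult_left_le)
    finally show ?thesis .
  qed
  then show ?thesis using that by blast
qed

lemma bounded_op_L2: "bounded_op A \<Longrightarrow> f \<in> L2 \<Longrightarrow> A f \<in> L2"
  unfolding bounded_op_def by blast

lemma l2norm_diff_le_opnorm:
  assumes A: "bounded_op A" and B: "bounded_op B" and f: "f \<in> L2" "l2norm f \<le> 1"
  shows "l2norm (\<lambda>x. A f x - B f x) \<le> opnorm (\<lambda>f x. A f x - B f x)"
proof -
  obtain MA where MA: "\<And>f. f \<in> L2 \<Longrightarrow> l2norm f \<le> 1 \<Longrightarrow> l2norm (A f) \<le> MA"
    using bounded_op_unit_ball_bound[OF A] by blast
  obtain MB where MB: "\<And>f. f \<in> L2 \<Longrightarrow> l2norm f \<le> 1 \<Longrightarrow> l2norm (B f) \<le> MB"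
    using bounded_op_unit_ball_bound[OF B] by blast
  show ?thesis
  proof (rule l2norm_le_opnorm[where M="MA + MB", OF _ f])
    fix g assume g: "g \<in> L2" "l2norm g \<le> 1"
    show "l2norm (\<lambda>x. A g x - B g x) \<le> MA + MB"
      using l2norm_diff_le[OF bounded_op_L2[OF A g(1)] bounded_op_L2[OF B g(1)]] MA[OF g] MB[OF g]
      by linarith
  qed
qed

lemma opnorm_diff_triangle:
  assumes A: "bounded_op A" and B: "bounded_op B" and C: "bounded_op C"
  shows "opnorm (\<lambda>f x. A f x - C f x) \<le> opnorm (\<lambda>f x. A f x - B f x) + opnorm (\<lambda>f x. B f x - C f x)"
proof (rule opnorm_le)
  fix f assume f: "f \<in> L2" "l2norm f \<le> 1"
  have "l2norm (\<lambda>x. A f x - C f x) = l2norm (\<lambda>x. (A f x - B f x) + (B f x - C f x))"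
    by simp
  also have "\<dots> \<le> l2norm (\<lambda>x. A f x - B f x) + l2norm (\<lambda>x. B f x - C f x)"
    using bounded_op_L2[OF A f(1)] bounded_op_L2[OF B f(1)] bounded_op_L2[OF C f(1)]
    by (intro l2norm_add_le L2_diff)
  also have "\<dots> \<le> opnorm (\<lambda>f x. A f x - B f x) + opnorm (\<lambda>f x. B f x - C f x)"
    using l2norm_diff_le_opnorm[OF A B f] l2norm_diff_le_opnorm[OF B C f] by linarith
  finally show "l2norm (\<lambda>x. A f x - C f x)
      \<le> opnorm (\<lambda>f x. A f x - B f x) + opnorm (\<lambda>f x. B f x - C f x)" .
qed

lemma opnorm_vconv_op_le:
  assumes "continuous_on UNIV k" and B: "\<And>u. u \<in> {0..1} \<Longrightarrow> norm (k u) \<le> B"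
    and "\<And>u. u \<in> {0..1} \<Longrightarrow> u > d \<Longrightarrow> k u = 0" and "d \<ge> 0"
  shows "opnorm (vconv_op k) \<le> B * sqrt d"
proof (rule opnorm_le)
  fix f assume f: "f \<in> L2" "l2norm f \<le> 1"
  have "B \<ge> 0" using order_trans[OF norm_ge_zero B[of 0]] by simp
  then have "B * sqrt d * l2norm f \<le> B * sqrt d"
    using f(2) \<open>d \<ge> 0\<close> by (simp add: mult_left_le)
  then show "l2norm (vconv_op k f) \<le> B * sqrt d"
    using l2norm_vconv_op_le[OF assms f(1)] by linarith
qed

lemma vconv_op_eq_0_near_0:
  assumes k0: "\<And>u. 0 \<le> u \<Longrightarrow> u \<le> \<delta> \<Longrightarrow> k u = 0"
    and g0: "\<And>y. 0 \<le> y \<Longrightarrow> y < c \<Longrightarrow> g y = 0" and x: "x \<le> c + \<delta>"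
  shows "vconv_op k g x = 0"
proof -
  have "(\<lambda>t. indicator {0..x} t *\<^sub>R (k (x - t) * restrict01 g t)) = (\<lambda>t. 0)"
  proof
    fix t
    show "indicator {0..x} t *\<^sub>R (k (x - t) * restrict01 g t) = 0"
    proof (cases "t \<in> {0..x}")
      case True
      then show ?thesis
        using g0[of t] k0[of "x - t"] x by (cases "t < c") (auto simp: restrict01_def)
    qed simp
  qed
  then show ?thesis
    unfolding vconv_op_def vconv_def set_lebesgue_integral_def by simp
qed

lemma nilpotent_vconv_op:
  assumes k0: "\<And>u. 0 \<le> u \<Longrightarrow> u \<le> \<delta> \<Longrightarrow> k u = 0" and \<delta>: "\<delta> > 0"
  shows "nilpotent_op (vconv_op k)"
proof -
  obtain n :: nat where n: "real n * \<delta> > 1"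
    using reals_Archimedean3[OF \<delta>] by blast
  have vanish: "(vconv_op k ^^ m) f y = 0" if "0 \<le> y" "y < real m * \<delta>" for m f y
    using that
  proof (induction m arbitrary: y)
    case (Suc m)
    have "(vconv_op k ^^ Suc m) f y = vconv_op k ((vconv_op k ^^ m) f) y"
      by simp
    also have "\<dots> = 0"
      by (rule vconv_op_eq_0_near_0[OF k0 Suc.IH]) (use Suc.prems in \<open>auto simp: algebra_simps\<close>)
    finally show ?case .
  qed simp
  have "l2norm ((vconv_op k ^^ n) f) = l2norm (\<lambda>x. 0)" for f
    by (rule l2norm_cong) (use vanish n in auto)
  then have "l2norm ((vconv_op k ^^ n) f) = 0" for f
    by (simp add: l2norm_zero)
  then show ?thesis unfolding nilpotent_op_def by blast
qed

section \<open>Cauchy's formula for repeated integration\<close>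

definition iterated_kernel :: "nat \<Rightarrow> real \<Rightarrow> complex" where
  "iterated_kernel j u = complex_of_real (u ^ j / fact j)"

lemma continuous_iterated_kernel: "continuous_on UNIV (iterated_kernel j)"
  unfolding iterated_kernel_def by (intro continuous_intros) auto

lemma norm_iterated_kernel_le_1:
  assumes "0 \<le> u" and "u \<le> 1"
  shows "norm (iterated_kernel j u) \<le> 1"
proof -
  have "u ^ j \<le> 1" using assms by (intro power_le_one)
  moreover have "(1::real) \<le> fact j" by simp
  ultimately have "u ^ j / fact j \<le> 1"
    by (smt (verit) divide_le_eq_1 fact_gt_zero)
  moreover have "norm (iterated_kernel j u) = \<bar>u ^ j / fact j\<bar>"
    by (simp only: iterated_kernel_def norm_of_real)
  ultimately show ?thesis using assms by simp
qed

lemma integral_iterated_kernel: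
  fixes t x :: real
  assumes "t \<le> x"
  shows "(\<integral>s. indicator {t..x} s * ((s - t) ^ j / fact j) \<partial>lborel) = (x - t) ^ Suc j / fact (Suc j)"
proof -
  have "(\<integral>s. indicator {t..x} s *\<^sub>R ((s - t) ^ j / fact j) \<partial>lborel) =
      (x - t) ^ Suc j / fact (Suc j) - (t - t) ^ Suc j / fact (Suc j)"
  proof (rule integral_FTC_atLeastAtMost[OF assms])
    fix s
    have "((\<lambda>s. s - t) has_real_derivative 1) (at s within {t..x})"
      by (auto intro!: derivative_eq_intros)
    from DERIV_power_Suc[OF this, of j]
    have "((\<lambda>s. (s - t) ^ Suc j / fact (Suc j)) has_real_derivative
        (real (Suc j) * (s - t) ^ j / fact (Suc j))) (at s within {t..x})"
      by (intro DERIV_cdivide) simp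
    moreover have "real (Suc j) * (s - t) ^ j / fact (Suc j) = (s - t) ^ j / fact j"
      by (simp del: of_nat_Suc)
    ultimately show "((\<lambda>s. (s - t) ^ Suc j / fact (Suc j))
        has_vector_derivative ((s - t) ^ j / fact j)) (at s within {t..x})"
      by (simp add: has_real_derivative_iff_has_vector_derivative)
  qed (intro continuous_intros, simp)
  then show ?thesis by simp
qed

lemma integrable_unit_square_norm:
  assumes f: "L2_supp01 f"
  shows "integrable (lborel \<Otimes>\<^sub>M lborel)
    (\<lambda>(s, t). indicator {0..1::real} s * (indicator {0..1} t * norm (f t)))"
proof (rule lborel_pair.Fubini_integrable)
  note [measurable] = L2_supp01_measurable[OF f]
  show "(\<lambda>(s, t). indicator {0..1::real} s * (indicator {0..1} t * norm (f t)))
      \<in> borel_measurable (lborel \<Otimes>\<^sub>M lborel)"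
    by measurable
  have "integrable lborel (\<lambda>t. norm (f t))"
    using L2_supp01_integrable[OF f] by simp
  then have int01: "integrable lborel (\<lambda>t. indicator {0..1} t * norm (f t))"
    using integrable_mult_indicator[of "{0..1}" lborel "\<lambda>t. norm (f t)"] by simp
  then show "AE s in lborel. integrable lborel
      (\<lambda>t. case (s, t) of (s, t) \<Rightarrow> indicator {0..1::real} s * (indicator {0..1} t * norm (f t)))"
    by simp
  have "(\<lambda>s. \<integral>t. norm (indicator {0..1::real} s * (indicator {0..1} t * norm (f t))) \<partial>lborel)
      = (\<lambda>s. indicator {0..1} s * (\<integral>t. indicator {0..1} t * norm (f t) \<partial>lborel))"
    by (simp add: abs_mult)
  then show "integrable lborel (\<lambda>s. \<integral>t. norm (case (s, t) of (s, t) \<Rightarrow>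
      indicator {0..1::real} s * (indicator {0..1} t * norm (f t))) \<partial>lborel)"
    by (simp add: emeasure_lborel_Icc_eq)
qed

lemma integrable_iterated_vconv_integrand:
  assumes f: "L2_supp01 f" and x: "x \<le> 1"
  shows "integrable (lborel \<Otimes>\<^sub>M lborel)
    (\<lambda>(s, t). indicator {0..x} s *\<^sub>R (indicator {0..s} t *\<^sub>R (iterated_kernel j (s - t) * f t)))"
    (is "integrable _ (\<lambda>(s, t). ?G s t)")
proof -
  define H where "H s t = indicator {0..1::real} s * (indicator {0..1} t * norm (f t))"
    for s t :: real
  note [measurable] = L2_supp01_measurable[OF f]
    borel_measurable_continuous_onI[OF continuous_iterated_kernel]
  have H: "integrable (lborel \<Otimes>\<^sub>M lborel) (\<lambda>(s, t). H s t)"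
    unfolding H_def by (rule integrable_unit_square_norm[OF f])
  have G: "(\<lambda>(s, t). ?G s t) \<in> borel_measurable (lborel \<Otimes>\<^sub>M lborel)"
  proof -
    have "(\<lambda>(s, t). ?G s t) = (\<lambda>z. (if 0 \<le> fst z \<and> fst z \<le> x then 1 else 0) *\<^sub>R
        ((if 0 \<le> snd z \<and> snd z \<le> fst z then 1 else 0) *\<^sub>R
          (iterated_kernel j (fst z - snd z) * f (snd z))))"
      by (auto simp: fun_eq_iff indicator_def)
    then show ?thesis by simp
  qed
  have bound: "norm (?G s t) \<le> norm (H s t)" for s t
  proof (cases "0 \<le> t \<and> t \<le> s \<and> s \<le> x")
    case True
    then have "norm (iterated_kernel j (s - t) * f t) \<le> norm (f t)"
      using norm_iterated_kernel_le_1[of "s - t" j] x by (simp add: norm_mult mult_left_le_one_le)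
    then show ?thesis using True x by (simp add: H_def)
  next
    case False
    then have "?G s t = 0" by (auto simp: indicator_def)
    then show ?thesis by (metis norm_ge_zero norm_zero)
  qed
  show ?thesis
  proof (rule Bochner_Integration.integrable_bound[OF H G AE_I2])
    fix z :: "real \<times> real"
    show "norm (case z of (s, t) \<Rightarrow> ?G s t) \<le> norm (case z of (s, t) \<Rightarrow> H s t)"
      using bound by (cases z) simp
  qed
qed

lemma integral_vconv_iterated_kernel:
  assumes f: "L2_supp01 f" and x: "0 \<le> x" "x \<le> 1"
  shows "(LINT s:{0..x}|lborel. vconv (iterated_kernel j) f s)
    = vconv (iterated_kernel (Suc j)) f x"
proof -
  define G where "G s t =
    indicator {0..x} s *\<^sub>R (indicator {0..s} t *\<^sub>R (iterated_kernel j (s - t) * f t))" for s t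
  have inner: "(\<integral>s. G s t \<partial>lborel)
      = indicator {0..x} t *\<^sub>R (iterated_kernel (Suc j) (x - t) * f t)" for t
  proof (cases "0 \<le> t \<and> t \<le> x")
    case True
    have "(\<lambda>s. G s t) = (\<lambda>s. complex_of_real (indicator {t..x} s * ((s - t) ^ j / fact j)) * f t)"
      using True by (auto simp: fun_eq_iff G_def indicator_def iterated_kernel_def)
    then have "(\<integral>s. G s t \<partial>lborel)
        = complex_of_real (\<integral>s. indicator {t..x} s * ((s - t) ^ j / fact j) \<partial>lborel) * f t"
      by (simp only: integral_mult_left_zero integral_complex_of_real)
    also have "\<dots> = iterated_kernel (Suc j) (x - t) * f t"
      using True by (simp only: integral_iterated_kernel iterated_kernel_def)
    finally show ?thesis
      using True by simp
  next
    case False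
    then have "(\<lambda>s. G s t) = (\<lambda>s. 0)" by (auto simp: fun_eq_iff G_def indicator_def)
    then show ?thesis using False by simp
  qed
  have "(LINT s:{0..x}|lborel. vconv (iterated_kernel j) f s) = (\<integral>s. \<integral>t. G s t \<partial>lborel \<partial>lborel)"
    unfolding set_lebesgue_integral_def vconv_def G_def by (simp only: integral_scaleR_right)
  also have "\<dots> = (\<integral>t. \<integral>s. G s t \<partial>lborel \<partial>lborel)"
    using integrable_iterated_vconv_integrand[OF f x(2), of j]
    by (intro lborel_pair.Fubini_integral[symmetric]) (simp add: G_def)
  also have "\<dots> = vconv (iterated_kernel (Suc j)) f x"
    unfolding vconv_def set_lebesgue_integral_def inner ..
  finally show ?thesis .
qed

lemma volterra_cong:
  "(\<And>t. t \<in> {0..x} \<Longrightarrow> f t = g t) \<Longrightarrow> volterra f x = volterra g x"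
  unfolding volterra_def by (rule set_lebesgue_integral_cong) auto

lemma volterra_power_cong:
  assumes "\<And>t. t \<in> {0..1} \<Longrightarrow> f t = g t" and "x \<in> {0..1}"
  shows "(volterra ^^ n) f x = (volterra ^^ n) g x"
  using assms(2)
proof (induction n arbitrary: x)
  case (Suc n)
  then show ?case by simp (rule volterra_cong, simp)
qed (simp add: assms(1))

lemma volterra_power_Suc_eq_vconv:
  assumes f: "L2_supp01 f" and x: "x \<in> {0..1}"
  shows "(volterra ^^ Suc j) f x = vconv (iterated_kernel j) f x"
  using x
proof (induction j arbitrary: x)
  case 0
  then show ?case by (simp add: volterra_def vconv_def iterated_kernel_def)
next
  case (Suc j)
  have "(volterra ^^ Suc (Suc j)) f x = volterra ((volterra ^^ Suc j) f) x"
    by simp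
  also have "\<dots> = volterra (vconv (iterated_kernel j) f) x"
    by (rule volterra_cong) (use Suc in auto)
  also have "\<dots> = vconv (iterated_kernel (Suc j)) f x"
    unfolding volterra_def using Suc.prems by (intro integral_vconv_iterated_kernel[OF f]) auto
  finally show ?case .
qed

section \<open>Polynomials in V as convolutions\<close>

definition kernel_poly :: "complex poly \<Rightarrow> complex poly" where
  "kernel_poly p = (\<Sum>i\<le>degree p. monom (coeff p (Suc i) / fact i) i)"

definition poly_of_kernel :: "complex poly \<Rightarrow> complex poly" where
  "poly_of_kernel Q = (\<Sum>i\<le>degree Q. monom (coeff Q i * fact i) (Suc i))"

lemma coeff_kernel_poly: "coeff (kernel_poly p) i = coeff p (Suc i) / fact i"
  by (auto simp: kernel_poly_def coeff_sum coeff_eq_0)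

lemma coeff_poly_of_kernel:
  "coeff (poly_of_kernel Q) 0 = 0" "coeff (poly_of_kernel Q) (Suc i) = coeff Q i * fact i"
  by (auto simp: poly_of_kernel_def coeff_sum coeff_eq_0)

lemma kernel_poly_of_kernel: "kernel_poly (poly_of_kernel Q) = Q"
  by (rule poly_eqI) (simp add: coeff_kernel_poly coeff_poly_of_kernel)

lemma poly_of_kernel_at_0: "poly (poly_of_kernel Q) 0 = 0"
  by (simp add: poly_0_coeff_0 coeff_poly_of_kernel)

lemma poly_kernel_poly:
  "poly (kernel_poly p) (complex_of_real u) = (\<Sum>i\<le>degree p. coeff p (Suc i) * iterated_kernel i u)"
  by (simp add: kernel_poly_def poly_sum poly_monom iterated_kernel_def)

lemma polyV_eq_vconv_op:
  assumes p0: "poly p 0 = 0" and f: "f \<in> L2" and x: "x \<in> {0..1}"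
  shows "polyV p f x = vconv_op (\<lambda>u. poly (kernel_poly p) (complex_of_real u)) f x"
proof -
  have g: "L2_supp01 (restrict01 f)" by (rule L2_supp01_restrict01[OF f])
  have "polyV p f x = (\<Sum>n\<le>Suc (degree p). coeff p n * (volterra ^^ n) f x)"
    unfolding polyV_def by (rule sum.mono_neutral_left) (auto simp: coeff_eq_0)
  also have "\<dots> = coeff p 0 * f x + (\<Sum>i\<le>degree p. coeff p (Suc i) * (volterra ^^ Suc i) f x)"
    by (simp only: sum.atMost_Suc_shift) simp
  also have "\<dots> = (\<Sum>i\<le>degree p. coeff p (Suc i) * (volterra ^^ Suc i) (restrict01 f) x)"
    using p0 volterra_power_cong[of f "restrict01 f", OF _ x]
    by (simp only: poly_0_coeff_0 restrict01_eq mult_zero_left add_0_left)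
  also have "\<dots> = (\<Sum>i\<le>degree p. coeff p (Suc i) * vconv (iterated_kernel i) (restrict01 f) x)"
    using volterra_power_Suc_eq_vconv[OF g x] by simp
  also have "\<dots> = vconv_op (\<lambda>u. poly (kernel_poly p) (complex_of_real u)) f x"
    unfolding vconv_op_def poly_kernel_poly using x
    by (intro vconv_kernel_sum[OF g] continuous_iterated_kernel) auto
  finally show ?thesis .
qed

section \<open>Approximation by nilpotent convolutions\<close>

lemma real_polynomial_function_eq_poly:
  assumes "real_polynomial_function r"
  obtains Q where "\<And>u. poly Q (complex_of_real u) = complex_of_real (r u)"
proof -
  obtain a n where r: "r = (\<lambda>x. \<Sum>i\<le>n. a i * x ^ i)"
    using assms real_polynomial_function_iff_sum by blast
  show ?thesis
    by (rule that[of "\<Sum>i\<le>n. monom (complex_of_real (a i)) i"]) (simp add: r poly_sum poly_monom)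
qed

lemma Weierstrass_complex_poly:
  fixes k :: "real \<Rightarrow> complex"
  assumes k: "continuous_on {0..1} k" and e: "e > 0"
  obtains Q where "\<And>u. u \<in> {0..1} \<Longrightarrow> norm (k u - poly Q (complex_of_real u)) < e"
proof -
  have "continuous_on {0..1} (\<lambda>u. Re (k u))" "continuous_on {0..1} (\<lambda>u. Im (k u))"
    by (intro continuous_intros k)+
  note approx = Stone_Weierstrass_real_polynomial_function[OF compact_Icc _ half_gt_zero[OF e]]
  obtain r1 where r1: "real_polynomial_function r1" "\<And>u. u \<in> {0..1} \<Longrightarrow> \<bar>Re (k u) - r1 u\<bar> < e / 2"
    using approx[OF \<open>continuous_on {0..1} (\<lambda>u. Re (k u))\<close>] by blast
  obtain r2 where r2: "real_polynomial_function r2" "\<And>u. u \<in> {0..1} \<Longrightarrow> \<bar>Im (k u) - r2 u\<bar> < e / 2"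
    using approx[OF \<open>continuous_on {0..1} (\<lambda>u. Im (k u))\<close>] by blast
  obtain Q1 where Q1: "\<And>u. poly Q1 (complex_of_real u) = complex_of_real (r1 u)"
    using real_polynomial_function_eq_poly[OF r1(1)] by blast
  obtain Q2 where Q2: "\<And>u. poly Q2 (complex_of_real u) = complex_of_real (r2 u)"
    using real_polynomial_function_eq_poly[OF r2(1)] by blast
  show ?thesis
  proof (rule that[of "Q1 + smult \<i> Q2"])
    fix u :: real assume u: "u \<in> {0..1}"
    have "norm (k u - poly (Q1 + smult \<i> Q2) (complex_of_real u))
        \<le> \<bar>Re (k u) - r1 u\<bar> + \<bar>Im (k u) - r2 u\<bar>"
      using cmod_le[of "k u - poly (Q1 + smult \<i> Q2) (complex_of_real u)"] by (simp add: Q1 Q2)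
    then show "norm (k u - poly (Q1 + smult \<i> Q2) (complex_of_real u)) < e"
      using r1(2)[OF u] r2(2)[OF u] by linarith
  qed
qed

lemma in_AV_vconv_op:
  assumes k: "continuous_on UNIV k"
  shows "in_AV (vconv_op k)"
  unfolding in_AV_def
proof (intro conjI allI impI bounded_op_vconv_op[OF k])
  fix e :: real assume e: "e > 0"
  obtain Q where Q: "\<And>u. u \<in> {0..1} \<Longrightarrow> norm (k u - poly Q (complex_of_real u)) < e / 2"
    using Weierstrass_complex_poly[OF continuous_on_subset[OF k subset_UNIV], of "e / 2"] e by auto
  define h where "h = (\<lambda>u. k u - poly Q (complex_of_real u))"
  have h: "continuous_on UNIV h"
    unfolding h_def by (intro continuous_intros k)
  have "opnorm (\<lambda>f x. vconv_op k f x - polyV (poly_of_kernel Q) f x) = opnorm (vconv_op h)"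
  proof (rule opnorm_cong)
    fix f and x :: real assume f: "f \<in> L2" and x: "x \<in> {0..1}"
    have "continuous_on UNIV (\<lambda>u. poly Q (complex_of_real u))"
      by (intro continuous_intros)
    then show "vconv_op k f x - polyV (poly_of_kernel Q) f x = vconv_op h f x"
      using x unfolding h_def polyV_eq_vconv_op[OF poly_of_kernel_at_0 f x] kernel_poly_of_kernel
      by (intro vconv_op_kernel_diff f k) auto
  qed
  also have "\<dots> \<le> e / 2 * sqrt 1"
    using Q by (intro opnorm_vconv_op_le[OF h]) (auto simp: h_def less_imp_le)
  finally show "\<exists>p. poly p 0 = 0 \<and> opnorm (\<lambda>f x. vconv_op k f x - polyV p f x) < e"
    using poly_of_kernel_at_0 e by (intro exI[of _ "poly_of_kernel Q"]) auto
qed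

definition cutoff :: "real \<Rightarrow> real \<Rightarrow> real" where
  "cutoff \<delta> u = min 1 (max 0 ((u - \<delta>) / \<delta>))"

lemma continuous_on_cutoff: "\<delta> \<noteq> 0 \<Longrightarrow> continuous_on UNIV (cutoff \<delta>)"
  unfolding cutoff_def by (intro continuous_intros) auto

lemma cutoff_properties:
  assumes "\<delta> > 0"
  shows "0 \<le> cutoff \<delta> u" and "cutoff \<delta> u \<le> 1"
    and "u \<le> \<delta> \<Longrightarrow> cutoff \<delta> u = 0" and "u \<ge> 2 * \<delta> \<Longrightarrow> cutoff \<delta> u = 1"
  using assms unfolding cutoff_def by (auto simp: divide_nonpos_pos le_divide_eq)

lemma opnorm_vconv_op_cutoff_le:
  assumes k: "continuous_on UNIV k" and B: "B \<ge> 0" "\<And>u. u \<in> {0..1} \<Longrightarrow> norm (k u) \<le> B"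
    and \<delta>: "\<delta> > 0"
  shows "opnorm (\<lambda>f x. vconv_op k f x - vconv_op (\<lambda>u. k u * cutoff \<delta> u) f x) \<le> B * sqrt (2 * \<delta>)"
proof -
  define h where "h = (\<lambda>u. k u * complex_of_real (1 - cutoff \<delta> u))"
  note cutoff = cutoff_properties[OF \<delta>]
  have kN: "continuous_on UNIV (\<lambda>u. k u * cutoff \<delta> u)"
    using \<delta> by (intro continuous_intros k continuous_on_cutoff) auto
  have "opnorm (\<lambda>f x. vconv_op k f x - vconv_op (\<lambda>u. k u * cutoff \<delta> u) f x) = opnorm (vconv_op h)"
    by (rule opnorm_cong) (simp add: vconv_op_kernel_diff k kN h_def algebra_simps)
  also have "\<dots> \<le> B * sqrt (2 * \<delta>)"
  proof (rule opnorm_vconv_op_le)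
    show "continuous_on UNIV h"
      unfolding h_def using \<delta> by (intro continuous_intros k continuous_on_cutoff) auto
    fix u :: real assume u: "u \<in> {0..1}"
    have "norm (h u) = norm (k u) * \<bar>1 - cutoff \<delta> u\<bar>"
      by (simp only: h_def norm_mult norm_of_real)
    also have "\<dots> \<le> B * 1"
      using B(2)[OF u] B(1) cutoff(1,2)[of u] by (intro mult_mono) auto
    finally show "norm (h u) \<le> B" by simp
    show "u > 2 * \<delta> \<Longrightarrow> h u = 0"
      using cutoff(4)[of u] by (simp add: h_def)
  qed (use \<delta> in simp)
  finally show ?thesis .
qed

lemma vconv_op_nilpotent_approximation:
  assumes k: "continuous_on UNIV k" and e: "e > 0"
  obtains N where "in_AV N" and "nilpotent_op N" and "opnorm (\<lambda>f x. vconv_op k f x - N f x) < e"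
proof -
  obtain B where B: "B \<ge> 0" "\<And>u. u \<in> {0..1} \<Longrightarrow> norm (k u) \<le> B"
    using continuous_on_compact_norm_bound[OF compact_Icc continuous_on_subset[OF k subset_UNIV]]
    by blast
  define \<delta> where "\<delta> = (e / (2 * (B + 1)))\<^sup>2 / 2"
  have \<delta>: "\<delta> > 0" using e B by (simp add: \<delta>_def)
  have sqrt_\<delta>: "sqrt (2 * \<delta>) = e / (2 * (B + 1))"
    using e B by (simp add: \<delta>_def)
  have "B * sqrt (2 * \<delta>) \<le> (B + 1) * (e / (2 * (B + 1)))"
    unfolding sqrt_\<delta> using e B(1) by (intro mult_right_mono) auto
  also have "\<dots> = e / 2" using B(1) by (simp add: field_simps)
  also have "\<dots> < e" using e by simp
  finally have small: "B * sqrt (2 * \<delta>) < e" .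
  define kN where "kN = (\<lambda>u. k u * complex_of_real (cutoff \<delta> u))"
  have kN: "continuous_on UNIV kN"
    unfolding kN_def using \<delta> by (intro continuous_intros k continuous_on_cutoff) auto
  have "nilpotent_op (vconv_op kN)"
    using cutoff_properties(3)[OF \<delta>] \<delta> by (intro nilpotent_vconv_op[where \<delta>=\<delta>]) (auto simp: kN_def)
  moreover have "opnorm (\<lambda>f x. vconv_op k f x - vconv_op kN f x) < e"
    using opnorm_vconv_op_cutoff_le[OF k B \<delta>] small unfolding kN_def by linarith
  ultimately show ?thesis
    using that in_AV_vconv_op[OF kN] by blast
qed

theorem mainTheorem19:
  shows "\<forall>T. in_AV T \<longrightarrow>
           (\<forall>e>0. \<exists>N. in_AV N \<and> nilpotent_op N \<and> opnorm (\<lambda>f x. T f x - N f x) < e)"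
proof (intro allI impI)
  fix T :: "(real \<Rightarrow> complex) \<Rightarrow> real \<Rightarrow> complex" and e :: real
  assume T: "in_AV T" and e: "e > 0"
  obtain p where p0: "poly p 0 = 0" and Tp: "opnorm (\<lambda>f x. T f x - polyV p f x) < e / 2"
    using T e unfolding in_AV_def by (meson half_gt_zero)
  define k where "k = (\<lambda>u. poly (kernel_poly p) (complex_of_real u))"
  have k: "continuous_on UNIV k"
    unfolding k_def by (intro continuous_intros)
  obtain N where N: "in_AV N" "nilpotent_op N"
    and kN: "opnorm (\<lambda>f x. vconv_op k f x - N f x) < e / 2"
    using vconv_op_nilpotent_approximation[OF k, of "e / 2"] e by auto
  have "opnorm (\<lambda>f x. T f x - polyV p f x) = opnorm (\<lambda>f x. T f x - vconv_op k f x)"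
    by (rule opnorm_cong) (simp add: polyV_eq_vconv_op[OF p0] k_def)
  then have "opnorm (\<lambda>f x. T f x - N f x) < e"
    using opnorm_diff_triangle[OF _ bounded_op_vconv_op[OF k], of T N] T N Tp kN
    unfolding in_AV_def by linarith
  then show "\<exists>N. in_AV N \<and> nilpotent_op N \<and> opnorm (\<lambda>f x. T f x - N f x) < e"
    using N by blast
qed

end
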